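(* Let $a, b, n_L, n_R, d \in \mathbb{N}$ satisfy $d \ge 2b$ and $n_L \ge a \cdot (2n_R/d)^b$. Then every $K_{a,b}$-free bipartite graph with $n_L$ left vertices and $n_R$ right vertices has a left vertex of degree at most $d$.
   Context: A bipartite graph with a designated left and right side is $K_{a,b}$-free if there are no $a$ left vertices and $b$ right vertices such that every one of the $a$ left vertices is adjacent to every one of the $b$ right vertices. *)

theory Defs
  imports Complex_Main
begin

text \<open>A bipartite graph is given by a finite left vertex set L, a finite right
vertex set R and an adjacency relation E (only pairs in L \<times> R are relevant).\<close>

definition Kab_free :: "'a set \<Rightarrow> 'b set \<Rightarrow> ('a \<Rightarrow> 'b \<Rightarrow> bool) \<Rightarrow> nat \<Rightarrow> nat \<Rightarrow> bool" where
  "Kab_free L R E a b \<longleftrightarrow>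
     \<not> (\<exists>A B. A \<subseteq> L \<and> B \<subseteq> R \<and> card A = a \<and> card B = b \<and> (\<forall>x\<in>A. \<forall>y\<in>B. E x y))"

definition left_degree :: "'b set \<Rightarrow> ('a \<Rightarrow> 'b \<Rightarrow> bool) \<Rightarrow> 'a \<Rightarrow> nat" where
  "left_degree R E v = card {w \<in> R. E v w}"

end

theory Submission
  imports Defs
begin

text \<open>Double count the pairs (v, B) with B a b-set of neighbours of the left vertex v.
  Every b-set of right vertices has fewer than a common neighbours, so
  \<open>\<Sum>v. (deg v choose b) \<le> (a - 1) * (nR choose b)\<close>. If every left degree exceeded d,
  the left-hand side would be at least \<open>nL * (d + 1 choose b)\<close>; and
  \<open>nR choose b \<le> (2 nR / d)^b * (d + 1 choose b)\<close>, comparing the factors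
  \<open>(nR - i) / (d + 1 - i) \<le> 2 nR / d\<close> for \<open>i < b \<le> d / 2\<close>. Together these
  contradict \<open>nL \<ge> a (2 nR / d)^b\<close>.\<close>

lemma binomial_le_power_mult_binomial:
  fixes n b d :: nat
  assumes "2 * b \<le> d"
  shows "real (n choose b) \<le> (2 * real n / real d) ^ b * real ((d + 1) choose b)"
proof (cases "b \<le> n")
  case False
  then have "n choose b = 0" by simp
  then show ?thesis by (simp del: binomial_eq_0_iff)
next
  case True
  have "real (n choose b) = (\<Prod>i = 0..<b. real (n - i) / real (b - i))"
    using True binomial_altdef_of_nat by blast
  also have "\<dots> \<le> (\<Prod>i = 0..<b. (2 * real n / real d) * (real (d + 1 - i) / real (b - i)))"
  proof (rule prod_mono)
    fix i assume "i \<in> {0..<b}"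
    then have "0 < d" "d \<le> 2 * (d + 1 - i)"
      using assms by auto
    then have "real n = (2 * real n / real d) * (real d / 2)"
      by simp
    also have "\<dots> \<le> (2 * real n / real d) * real (d + 1 - i)"
      by (intro mult_left_mono) (use \<open>d \<le> 2 * (d + 1 - i)\<close> in linarith, simp)
    finally have "real n \<le> (2 * real n / real d) * real (d + 1 - i)" .
    then have "real (n - i) \<le> (2 * real n / real d) * real (d + 1 - i)"
      using of_nat_le_iff[of "n - i" n] by linarith
    then have "real (n - i) / real (b - i) \<le> (2 * real n / real d) * real (d + 1 - i) / real (b - i)"
      by (rule divide_right_mono) simp
    then show "0 \<le> real (n - i) / real (b - i) \<and>
        real (n - i) / real (b - i) \<le> (2 * real n / real d) * (real (d + 1 - i) / real (b - i))"
      by simp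
  qed
  also have "\<dots> = (2 * real n / real d) ^ b * (\<Prod>i = 0..<b. real (d + 1 - i) / real (b - i))"
    unfolding prod.distrib by simp
  also have "\<dots> = (2 * real n / real d) ^ b * real ((d + 1) choose b)"
    using assms by (simp add: binomial_altdef_of_nat[where 'a = real])
  finally show ?thesis .
qed

lemma sum_left_degree_choose_eq:
  assumes "finite L" "finite R"
  shows "(\<Sum>v\<in>L. left_degree R E v choose b)
    = (\<Sum>B \<in> {B. B \<subseteq> R \<and> card B = b}. card {v \<in> L. \<forall>y\<in>B. E v y})"
proof -
  define P where "P = {B. B \<subseteq> R \<and> card B = b}"
  have "finite P"
    unfolding P_def using assms(2) by simp
  have "left_degree R E v choose b = (\<Sum>B\<in>P. if \<forall>y\<in>B. E v y then 1 else 0)" for v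
  proof -
    have "{B \<in> P. \<forall>y\<in>B. E v y} = {B. B \<subseteq> {w \<in> R. E v w} \<and> card B = b}"
      unfolding P_def by auto
    then show ?thesis
      using \<open>finite P\<close> assms(2) by (simp add: sum.If_cases Int_def left_degree_def n_subsets)
  qed
  then have "(\<Sum>v\<in>L. left_degree R E v choose b)
      = (\<Sum>B\<in>P. \<Sum>v\<in>L. if \<forall>y\<in>B. E v y then 1 else 0)"
    by (simp add: sum.swap[of _ L])
  also have "\<dots> = (\<Sum>B\<in>P. card {v \<in> L. \<forall>y\<in>B. E v y})"
    using assms(1) by (simp add: sum.If_cases Int_def)
  finally show ?thesis
    unfolding P_def .
qed

lemma Kab_free_card_common_neighbours_less:
  assumes "Kab_free L R E a b" "B \<subseteq> R" "card B = b"
  shows "card {v \<in> L. \<forall>y\<in>B. E v y} < a"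
proof (rule ccontr)
  assume "\<not> ?thesis"
  then obtain A where "A \<subseteq> {v \<in> L. \<forall>y\<in>B. E v y}" "card A = a"
    by (meson not_less obtain_subset_with_card_n)
  then show False
    using assms unfolding Kab_free_def by blast
qed

lemma Kab_free_sum_left_degree_choose_le:
  assumes "finite L" "finite R" "Kab_free L R E a b"
  shows "(\<Sum>v\<in>L. left_degree R E v choose b) \<le> (a - 1) * (card R choose b)"
proof -
  have "(\<Sum>v\<in>L. left_degree R E v choose b)
      = (\<Sum>B \<in> {B. B \<subseteq> R \<and> card B = b}. card {v \<in> L. \<forall>y\<in>B. E v y})"
    using assms(1,2) by (rule sum_left_degree_choose_eq)
  also have "\<dots> \<le> (\<Sum>B \<in> {B. B \<subseteq> R \<and> card B = b}. a - 1)"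
  proof (rule sum_mono)
    fix B assume "B \<in> {B. B \<subseteq> R \<and> card B = b}"
    then have "card {v \<in> L. \<forall>y\<in>B. E v y} < a"
      using Kab_free_card_common_neighbours_less[OF assms(3)] by blast
    then show "card {v \<in> L. \<forall>y\<in>B. E v y} \<le> a - 1"
      by simp
  qed
  also have "\<dots> = (a - 1) * (card R choose b)"
    using assms(2) by (simp add: n_subsets)
  finally show ?thesis .
qed

theorem lemma2p5:
  fixes L :: "'a set" and R :: "'b set" and E :: "'a \<Rightarrow> 'b \<Rightarrow> bool"
    and a b nL nR d :: nat
  assumes "a \<ge> 1" "b \<ge> 1" "nL \<ge> 1" "nR \<ge> 1" "d \<ge> 1"
    and "d \<ge> 2 * b"
    and "real nL \<ge> real a * (2 * real nR / real d) ^ b"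
    and "finite L" "finite R" "card L = nL" "card R = nR"
    and "Kab_free L R E a b"
  shows "\<exists>v\<in>L. left_degree R E v \<le> d"
proof (rule ccontr)
  assume "\<not> ?thesis"
  then have "left_degree R E v \<ge> d + 1" if "v \<in> L" for v
    using that by force
  then have "nL * ((d + 1) choose b) \<le> (\<Sum>v\<in>L. left_degree R E v choose b)"
    using assms(10) sum_mono[of L "\<lambda>_. (d + 1) choose b"] binomial_right_mono by force
  also have "\<dots> \<le> (a - 1) * (nR choose b)"
    using Kab_free_sum_left_degree_choose_le assms(8,9,11,12) by blast
  finally have "real nL * real ((d + 1) choose b) \<le> real (a - 1) * real (nR choose b)"
    by (simp only: of_nat_mult [symmetric] of_nat_le_iff)
  also have "\<dots> \<le> real (a - 1) * ((2 * real nR / real d) ^ b * real ((d + 1) choose b))"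
    by (rule mult_left_mono[OF binomial_le_power_mult_binomial[OF assms(6)]]) simp
  also have "\<dots> < real a * ((2 * real nR / real d) ^ b * real ((d + 1) choose b))"
    using assms(1,4,5,6) by (intro mult_strict_right_mono) simp_all
  also have "\<dots> \<le> real nL * real ((d + 1) choose b)"
    using assms(7) by (simp add: mult.assoc[symmetric] mult_right_mono)
  finally show False by simp
qed

end
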